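(* Let $T$ be a non-star tree and $x$ a vertex of $T$ with neighbors $x_1,\dots,x_n$, $n\ge 2$. Suppose that for $i=1,\dots,p$, where $1\le p<n$, there exists a $(T_{(x_i,x)},x_i)$-well 2-placement. Let $T'$ be the connected component containing $x$ in $T-\{xx_i: i=1,\dots,p\}$. If there exists a $(T',z)$-well 2-placement $\sigma$ with $dist(x,\sigma(x))\le 3$, where $z$ is a vertex of $T'$, then there exists a $(T,z)$-well 2-placement $\sigma_z$ with $\sigma_z(v)=\sigma(v)$ for every $v\in V(T')$.
   Context: All graphs are finite, simple and undirected. A non-star tree is a tree not isomorphic to a star $K_{1,m}$ for any $m\ge0$. For an edge $ab$ of a tree $T$, $T_{(a,b)}$ denotes the connected component containing $a$ in $T-\{ab\}$. For a tree $S$, a permutation $\sigma$ of $V(S)$ is a 2-placement of $S$ if $\sigma(a)\sigma(b)\notin E(S)$ for every edge $ab\in E(S)$; $\sigma(S)\subseteq S^k$ means $dist_S(\sigma(a),\sigma(b))\le k$ for every edge $ab$ of $S$. For a non-star tree $S$ and vertex $w$, a fixed-point-free permutation $\sigma$ of $V(S)$ is an $(S,w)$-well 2-placement if (distances and degrees taken in $S$): (1) $\sigma$ is a 2-placement of $S$; (2) $\sigma(S)\subseteq S^6$; (3) $dist(w,\sigma(w))\le 2$; (4) $dist(y,\sigma(y))\le 3$ for every neighbor $y$ of $w$; (5) $dist(y,\sigma(y))\le 4$ for every $y$ of degree $1$; (6) every cycle of $\sigma$ (in its disjoint cycle decomposition) has length at most $5$. *)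

theory Defs
  imports Main
begin

type_synonym 'a graph = "'a set \<times> 'a set set"

definition verts :: "'a graph \<Rightarrow> 'a set" where "verts G = fst G"
definition edges :: "'a graph \<Rightarrow> 'a set set" where "edges G = snd G"

definition simple_graph :: "'a graph \<Rightarrow> bool" where
  "simple_graph G \<longleftrightarrow> finite (verts G) \<and>
     (\<forall>e\<in>edges G. \<exists>u v. u \<noteq> v \<and> e = {u, v} \<and> u \<in> verts G \<and> v \<in> verts G)"

definition adj :: "'a graph \<Rightarrow> 'a \<Rightarrow> 'a \<Rightarrow> bool" where
  "adj G u v \<longleftrightarrow> {u, v} \<in> edges G"

definition walk :: "'a graph \<Rightarrow> 'a list \<Rightarrow> bool" where
  "walk G xs \<longleftrightarrow> xs \<noteq> [] \<and> set xs \<subseteq> verts G \<and>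
     (\<forall>i. Suc i < length xs \<longrightarrow> adj G (xs ! i) (xs ! Suc i))"

definition reachable :: "'a graph \<Rightarrow> 'a \<Rightarrow> 'a \<Rightarrow> bool" where
  "reachable G u v \<longleftrightarrow> (\<exists>xs. walk G xs \<and> hd xs = u \<and> last xs = v)"

definition connected_graph :: "'a graph \<Rightarrow> bool" where
  "connected_graph G \<longleftrightarrow> verts G \<noteq> {} \<and> (\<forall>u\<in>verts G. \<forall>v\<in>verts G. reachable G u v)"

definition is_cycle :: "'a graph \<Rightarrow> 'a list \<Rightarrow> bool" where
  "is_cycle G xs \<longleftrightarrow> length xs \<ge> 3 \<and> distinct xs \<and> walk G xs \<and> adj G (last xs) (hd xs)"

definition tree :: "'a graph \<Rightarrow> bool" where
  "tree G \<longleftrightarrow> simple_graph G \<and> connected_graph G \<and> \<not> (\<exists>xs. is_cycle G xs)"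

definition gdist :: "'a graph \<Rightarrow> 'a \<Rightarrow> 'a \<Rightarrow> nat" where
  "gdist G u v = (LEAST n. \<exists>xs. walk G xs \<and> hd xs = u \<and> last xs = v \<and> length xs = Suc n)"

definition neighbors :: "'a graph \<Rightarrow> 'a \<Rightarrow> 'a set" where
  "neighbors G v = {u \<in> verts G. adj G v u}"

definition degree :: "'a graph \<Rightarrow> 'a \<Rightarrow> nat" where
  "degree G v = card (neighbors G v)"

definition component :: "'a graph \<Rightarrow> 'a \<Rightarrow> 'a graph" where
  "component G v = ({u. reachable G v u}, {e \<in> edges G. e \<subseteq> {u. reachable G v u}})"

definition delete_edges :: "'a graph \<Rightarrow> 'a set set \<Rightarrow> 'a graph" where
  "delete_edges G F = (verts G, edges G - F)"

definition is_star :: "'a graph \<Rightarrow> bool" where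
  "is_star G \<longleftrightarrow> (\<exists>c\<in>verts G. edges G = {{c, v} | v. v \<in> verts G \<and> v \<noteq> c})"

definition two_placement :: "'a graph \<Rightarrow> ('a \<Rightarrow> 'a) \<Rightarrow> bool" where
  "two_placement G \<sigma> \<longleftrightarrow> bij_betw \<sigma> (verts G) (verts G) \<and>
     (\<forall>a b. adj G a b \<longrightarrow> \<not> adj G (\<sigma> a) (\<sigma> b))"

definition well_2_placement :: "'a graph \<Rightarrow> 'a \<Rightarrow> ('a \<Rightarrow> 'a) \<Rightarrow> bool" where
  "well_2_placement S w \<sigma> \<longleftrightarrow>
     tree S \<and> \<not> is_star S \<and> w \<in> verts S \<and>
     (\<forall>v\<in>verts S. \<sigma> v \<noteq> v) \<and>
     two_placement S \<sigma> \<and>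
     (\<forall>a b. adj S a b \<longrightarrow> gdist S (\<sigma> a) (\<sigma> b) \<le> 6) \<and>
     gdist S w (\<sigma> w) \<le> 2 \<and>
     (\<forall>y\<in>neighbors S w. gdist S y (\<sigma> y) \<le> 3) \<and>
     (\<forall>y\<in>verts S. degree S y = 1 \<longrightarrow> gdist S y (\<sigma> y) \<le> 4) \<and>
     (\<forall>v\<in>verts S. \<exists>k\<in>{1..5}. (\<sigma> ^^ k) v = v)"

end

theory Submission
  imports Defs "HOL-Library.Disjoint_Sets"
begin

text \<open>Cutting the edges x y, y \<in> P, splits T into vertex-disjoint induced subtrees: T' around x
  and the branches T_(y,x), attached to the rest only through their edge to x. Gluing \<sigma> with
  well 2-placements of the branches gives a fixed-point-free permutation of V(T) with cycles of
  length at most 5, and every condition inside a piece is inherited, since distances in T are at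
  most those in the piece. For a cut edge x y, \<sigma>(x) \<noteq> x lies in T', whose only exit is x, so it
  is not adjacent to the image of y, and the two images are at distance at most 3 + 1 + 2.
  Leaves and neighbours of z keep their neighbourhoods, except branch roots, which move by at most 2.\<close>

section \<open>Walks, reachability and distance\<close>

lemma adj_commute: "adj G u v \<longleftrightarrow> adj G v u"
  unfolding adj_def by (simp add: insert_commute)

lemma adj_verts:
  assumes "simple_graph G" "adj G u v"
  shows "u \<in> verts G" "v \<in> verts G" "u \<noteq> v"
  using assms unfolding simple_graph_def adj_def by (auto simp: doubleton_eq_iff)

lemma walk_Nil [simp]: "\<not> walk G []"
  by (simp add: walk_def)

lemma walk_singleton [simp]: "walk G [u] \<longleftrightarrow> u \<in> verts G"
  by (simp add: walk_def)

lemma walk_Cons_Cons [simp]: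
  "walk G (u # v # xs) \<longleftrightarrow> u \<in> verts G \<and> adj G u v \<and> walk G (v # xs)"
proof -
  have "(\<forall>i. Suc i < length (u # v # xs) \<longrightarrow> adj G ((u # v # xs) ! i) ((u # v # xs) ! Suc i))
    \<longleftrightarrow> adj G u v \<and> (\<forall>i. Suc i < length (v # xs) \<longrightarrow> adj G ((v # xs) ! i) ((v # xs) ! Suc i))"
    by (simp add: All_less_Suc2)
  then show ?thesis
    unfolding walk_def by auto
qed

lemma walk_verts: "walk G ws \<Longrightarrow> set ws \<subseteq> verts G"
  by (simp add: walk_def)

lemma walk_append_iff: "walk G (xs @ y # zs) \<longleftrightarrow> walk G (xs @ [y]) \<and> walk G (y # zs)"
  by (induction xs rule: induct_list012) (auto dest: walk_verts)

lemma walk_rev: "walk G ws \<Longrightarrow> walk G (rev ws)"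
proof (induction ws rule: induct_list012)
  case (3 u v xs)
  then have "walk G (rev (v # xs))" "walk G [v, u]"
    using walk_verts[of G "v # xs"] by (auto simp: adj_commute)
  then show ?case
    using walk_append_iff[of G "rev xs" v "[u]"] by simp
qed auto

lemma walk_mono:
  "walk G ws \<Longrightarrow> verts G \<subseteq> verts H \<Longrightarrow> edges G \<subseteq> edges H \<Longrightarrow> walk H ws"
  unfolding walk_def adj_def by blast

lemma walk_join:
  assumes "walk G xs" "walk G ys" "last xs = hd ys"
  shows "walk G (butlast xs @ ys)" "hd (butlast xs @ ys) = hd xs"
    and "last (butlast xs @ ys) = last ys" "length (butlast xs @ ys) = length xs + length ys - 1"
proof -
  have xs: "xs = butlast xs @ [hd ys]" and ys: "ys = hd ys # tl ys"
    using assms unfolding walk_def by (metis append_butlast_last_id, simp)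
  show "walk G (butlast xs @ ys)"
    using assms xs ys walk_append_iff[of G "butlast xs" "hd ys" "tl ys"] by auto
  show "hd (butlast xs @ ys) = hd xs"
    using xs ys by (cases "butlast xs") auto
  show "last (butlast xs @ ys) = last ys"
    using ys by (metis last_appendR list.discI)
  show "length (butlast xs @ ys) = length xs + length ys - 1"
    using assms(1) by (cases xs) (auto simp: walk_def)
qed

lemma walk_shortcut_to_path:
  "walk G ws \<Longrightarrow> \<exists>ps. walk G ps \<and> distinct ps \<and> hd ps = hd ws \<and> last ps = last ws"
proof (induction "length ws" arbitrary: ws rule: less_induct)
  case less
  show ?case
  proof (cases "distinct ws")
    case False
    then obtain as y bs cs where ws: "ws = as @ [y] @ bs @ [y] @ cs"
      using not_distinct_decomp by blast
    have "walk G (as @ [y])" "walk G (y # cs)"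
      using less.prems walk_append_iff[of G as y "bs @ [y] @ cs"]
        walk_append_iff[of G "as @ y # bs" y cs] unfolding ws by auto
    then have "walk G (as @ y # cs)"
      using walk_append_iff[of G as y cs] by blast
    moreover have "length (as @ y # cs) < length ws"
      unfolding ws by simp
    ultimately obtain ps where "walk G ps" "distinct ps"
      "hd ps = hd (as @ y # cs)" "last ps = last (as @ y # cs)"
      using less.hyps[of "as @ y # cs"] by blast
    moreover have "hd (as @ y # cs) = hd ws"
      unfolding ws by (cases as) simp_all
    moreover have "last (as @ y # cs) = last ws"
      unfolding ws by (cases cs) simp_all
    ultimately show ?thesis
      by auto
  qed (use less.prems in blast)
qed

lemma reachable_refl: "u \<in> verts G \<Longrightarrow> reachable G u u"
  unfolding reachable_def by (rule exI[of _ "[u]"]) simp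

lemma reachable_adj: "adj G u v \<Longrightarrow> u \<in> verts G \<Longrightarrow> v \<in> verts G \<Longrightarrow> reachable G u v"
  unfolding reachable_def by (rule exI[of _ "[u, v]"]) simp

lemma reachable_verts: "reachable G u v \<Longrightarrow> u \<in> verts G \<and> v \<in> verts G"
  unfolding reachable_def walk_def by (metis hd_in_set last_in_set subsetD)

lemma reachable_sym: "reachable G u v \<Longrightarrow> reachable G v u"
  unfolding reachable_def by (metis walk_rev hd_rev last_rev)

lemma reachable_trans: "reachable G u v \<Longrightarrow> reachable G v w \<Longrightarrow> reachable G u w"
  unfolding reachable_def by (metis walk_join(1-3))

lemma reachable_mono:
  "reachable G u v \<Longrightarrow> verts G \<subseteq> verts H \<Longrightarrow> edges G \<subseteq> edges H \<Longrightarrow> reachable H u v"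
  unfolding reachable_def by (metis walk_mono)

lemma reachable_invariant:
  assumes "reachable G u v" "Q u" "\<And>a b. Q a \<Longrightarrow> adj G a b \<Longrightarrow> Q b"
  shows "Q v"
proof -
  obtain ws where "walk G ws" "hd ws = u" "last ws = v"
    using assms(1) unfolding reachable_def by blast
  then show ?thesis
    using assms(2,3) by (induction ws arbitrary: u rule: induct_list012) auto
qed

lemma reachable_avoiding:
  assumes "reachable G u v" "\<not> reachable G u x"
  shows "reachable (delete_edges G {e. x \<in> e}) u v"
proof -
  obtain ws where ws: "walk G ws" "hd ws = u" "last ws = v"
    using assms(1) unfolding reachable_def by blast
  have "x \<notin> set ws"
  proof
    assume "x \<in> set ws"
    then obtain as bs where "ws = as @ x # bs"
      by (meson split_list)
    then have "walk G (as @ [x])" "hd (as @ [x]) = u"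
      using ws walk_append_iff[of G as x bs] by (auto simp: hd_append split: if_splits)
    then show False
      using assms(2) unfolding reachable_def by force
  qed
  then have "walk (delete_edges G {e. x \<in> e}) ws"
    using ws(1) by (induction ws rule: induct_list012) (auto simp: adj_def delete_edges_def verts_def edges_def)
  then show ?thesis
    using ws unfolding reachable_def by blast
qed

lemma gdist_le_walk:
  assumes "walk G ws"
  shows "gdist G (hd ws) (last ws) \<le> length ws - 1"
proof -
  have "length ws \<noteq> 0"
    using assms by auto
  then show ?thesis
    unfolding gdist_def using assms by (intro Least_le exI[of _ ws]) simp
qed

lemma gdist_walk:
  assumes "reachable G u v"
  obtains ws where "walk G ws" "hd ws = u" "last ws = v" "length ws = Suc (gdist G u v)"
proof -
  obtain ws where ws: "walk G ws" "hd ws = u" "last ws = v"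
    using assms unfolding reachable_def by blast
  have "length ws \<noteq> 0"
    using ws(1) by auto
  then have "\<exists>n ws. walk G ws \<and> hd ws = u \<and> last ws = v \<and> length ws = Suc n"
    using ws by (intro exI[of _ "length ws - 1"] exI[of _ ws]) simp
  from LeastI_ex[OF this] obtain ws' where
    "walk G ws' \<and> hd ws' = u \<and> last ws' = v \<and> length ws' = Suc (gdist G u v)"
    unfolding gdist_def by blast
  then show thesis
    using that by blast
qed

lemma gdist_mono:
  assumes "reachable G u v" "verts G \<subseteq> verts H" "edges G \<subseteq> edges H"
  shows "gdist H u v \<le> gdist G u v"
proof -
  obtain ws where "walk G ws" "hd ws = u" "last ws = v" "length ws = Suc (gdist G u v)"
    using assms(1) by (rule gdist_walk)
  then have "walk H ws"
    using walk_mono assms(2,3) by blast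
  then show ?thesis
    using gdist_le_walk[of H ws] \<open>hd ws = u\<close> \<open>last ws = v\<close> \<open>length ws = Suc (gdist G u v)\<close> by simp
qed

lemma gdist_commute:
  assumes "reachable G u v"
  shows "gdist G u v = gdist G v u"
proof -
  have le: "gdist G b a \<le> gdist G a b" if ab: "reachable G a b" for a b
  proof -
    obtain ws where ws: "walk G ws" "hd ws = a" "last ws = b" "length ws = Suc (gdist G a b)"
      using ab by (rule gdist_walk)
    show ?thesis
      using gdist_le_walk[OF walk_rev[OF ws(1)]] ws(2-4) by (simp add: hd_rev last_rev)
  qed
  show ?thesis
    using le[OF assms] le[OF reachable_sym[OF assms]] by simp
qed

lemma gdist_adj_le: "adj G u v \<Longrightarrow> u \<in> verts G \<Longrightarrow> v \<in> verts G \<Longrightarrow> gdist G u v \<le> 1"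
  using gdist_le_walk[of G "[u, v]"] by simp

lemma gdist_triangle:
  assumes "reachable G u v" "reachable G v w"
  shows "gdist G u w \<le> gdist G u v + gdist G v w"
proof -
  obtain xs where xs: "walk G xs" "hd xs = u" "last xs = v" "length xs = Suc (gdist G u v)"
    using assms(1) by (rule gdist_walk)
  obtain ys where ys: "walk G ys" "hd ys = v" "last ys = w" "length ys = Suc (gdist G v w)"
    using assms(2) by (rule gdist_walk)
  have "last xs = hd ys"
    using xs(3) ys(2) by simp
  note join = walk_join[OF xs(1) ys(1) this]
  show ?thesis
    using gdist_le_walk[OF join(1)] unfolding join(2-4) xs(2,4) ys(3,4) by simp
qed

section \<open>Components after deleting edges\<close>

lemma verts_delete_edges [simp]: "verts (delete_edges G F) = verts G"
  and edges_delete_edges [simp]: "edges (delete_edges G F) = edges G - F"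
  unfolding delete_edges_def verts_def edges_def by simp_all

lemma adj_delete_edges [simp]: "adj (delete_edges G F) u v \<longleftrightarrow> adj G u v \<and> {u, v} \<notin> F"
  unfolding adj_def by simp

lemma simple_graph_delete_edges: "simple_graph G \<Longrightarrow> simple_graph (delete_edges G F)"
  unfolding simple_graph_def by simp

lemma verts_component: "verts (component G r) = {u. reachable G r u}"
  and edges_component: "edges (component G r) = {e \<in> edges G. e \<subseteq> {u. reachable G r u}}"
  unfolding component_def verts_def edges_def by simp_all

lemma component_subgraph: "verts (component G r) \<subseteq> verts G" "edges (component G r) \<subseteq> edges G"
  unfolding verts_component edges_component by (blast dest: reachable_verts)+

lemma root_in_component: "r \<in> verts G \<Longrightarrow> r \<in> verts (component G r)"
  unfolding verts_component by (simp add: reachable_refl)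

lemma component_closed:
  assumes "simple_graph G" "a \<in> verts (component G r)" "adj G a b"
  shows "b \<in> verts (component G r)"
proof -
  have "reachable G a b"
    using reachable_adj[OF assms(3) adj_verts(1,2)[OF assms(1,3)]] .
  then show ?thesis
    using assms(2) reachable_trans[of G r a b] unfolding verts_component by blast
qed

lemma adj_component_iff:
  "a \<in> verts (component G r) \<Longrightarrow> b \<in> verts (component G r) \<Longrightarrow> adj (component G r) a b \<longleftrightarrow> adj G a b"
  unfolding adj_def verts_component edges_component by simp

lemma neighbors_component:
  assumes "simple_graph G" "a \<in> verts (component G r)"
  shows "neighbors (component G r) a = neighbors G a"
proof -
  have "b \<in> verts (component G r) \<and> adj (component G r) a b \<longleftrightarrow> b \<in> verts G \<and> adj G a b" for b
    using component_closed[OF assms] adj_component_iff[OF assms(2)] adj_verts(2)[OF assms(1)]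
      component_subgraph(1) by blast
  then show ?thesis
    unfolding neighbors_def by blast
qed

lemma tree_reachable: "tree T \<Longrightarrow> u \<in> verts T \<Longrightarrow> v \<in> verts T \<Longrightarrow> reachable T u v"
  unfolding tree_def connected_graph_def by blast

lemma gdist_le_subtree:
  assumes "tree S" "verts S \<subseteq> verts G" "edges S \<subseteq> edges G" "u \<in> verts S" "v \<in> verts S"
  shows "gdist G u v \<le> gdist S u v"
  using gdist_mono[OF tree_reachable[OF assms(1,4,5)] assms(2,3)] .

lemma tree_delete_edge_separates:
  assumes "tree T" "adj T u v" "{u, v} \<in> F"
  shows "\<not> reachable (delete_edges T F) u v"
proof
  assume "reachable (delete_edges T F) u v"
  then obtain ws where "walk (delete_edges T F) ws" "hd ws = u" "last ws = v"
    unfolding reachable_def by blast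
  then obtain ps where ps: "walk (delete_edges T F) ps" "distinct ps" "hd ps = u" "last ps = v"
    using walk_shortcut_to_path by blast
  have "u \<noteq> v"
    using assms(1) adj_verts(3)[OF _ assms(2)] unfolding tree_def by blast
  obtain a ps' where ps_a: "ps = a # ps'"
    using ps(1) by (cases ps) auto
  have "ps' \<noteq> []"
    using ps_a ps(3,4) \<open>u \<noteq> v\<close> by auto
  then obtain b rest where ps_eq: "ps = a # b # rest"
    using ps_a by (cases ps') auto
  show False
  proof (cases rest)
    case Nil
    then show False
      using ps assms(3) ps_eq by auto
  next
    case (Cons c rest')
    have "walk T ps"
      using walk_mono[OF ps(1)] by simp
    moreover have "adj T (last ps) (hd ps)"
      using ps(3,4) assms(2) by (simp add: adj_commute)
    ultimately have "is_cycle T ps"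
      using ps(2) unfolding is_cycle_def ps_eq Cons by simp
    then show False
      using assms(1) unfolding tree_def by blast
  qed
qed

section \<open>Splitting a tree at a vertex\<close>

locale tree_split =
  fixes T :: "'a graph" and x :: 'a and P :: "'a set"
  assumes tree: "tree T" and x_vert: "x \<in> verts T" and P_nbrs: "P \<subseteq> neighbors T x"
begin

text \<open>piece x is T' and, for y in P, piece y is the branch T_(y,x).\<close>

definition cut_edges :: "'a \<Rightarrow> 'a set set" where
  "cut_edges i = (if i = x then (\<lambda>y. {x, y}) ` P else {{x, i}})"

definition piece :: "'a \<Rightarrow> 'a graph" where
  "piece i = component (delete_edges T (cut_edges i)) i"

lemma simple_T: "simple_graph T"
  using tree unfolding tree_def by blast

lemma P_adj: "y \<in> P \<Longrightarrow> adj T x y \<and> y \<in> verts T \<and> y \<noteq> x"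
  using P_nbrs adj_verts(3)[OF simple_T] unfolding neighbors_def by blast

lemma x_notin_P: "x \<notin> P"
  using P_adj by blast

lemma piece_subgraph: "verts (piece i) \<subseteq> verts T" "edges (piece i) \<subseteq> edges T"
  unfolding piece_def using component_subgraph[of "delete_edges T (cut_edges i)" i] by auto

lemma root_in_piece: "i \<in> insert x P \<Longrightarrow> i \<in> verts (piece i)"
  unfolding piece_def using x_vert P_adj by (auto intro: root_in_component)

lemma P_notin_piece_x:
  assumes "y \<in> P"
  shows "y \<notin> verts (piece x)"
proof -
  have "{x, y} \<in> cut_edges x"
    using assms unfolding cut_edges_def by simp
  then have "\<not> reachable (delete_edges T (cut_edges x)) x y"
    using tree_delete_edge_separates[OF tree] P_adj[OF assms] by blast
  then show ?thesis
    unfolding piece_def verts_component by simp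
qed

lemma x_notin_piece:
  assumes "y \<in> P"
  shows "x \<notin> verts (piece y)"
proof -
  have "{y, x} \<in> cut_edges y" "adj T y x"
    using assms P_adj[OF assms] x_notin_P adj_commute[of T x y]
    unfolding cut_edges_def by (auto simp: insert_commute)
  then have "\<not> reachable (delete_edges T (cut_edges y)) y x"
    using tree_delete_edge_separates[OF tree] by blast
  then show ?thesis
    unfolding piece_def verts_component by simp
qed

lemma cut_edge_piece:
  assumes "i \<in> insert x P" "{a, b} \<in> cut_edges i" "a \<in> verts (piece i)"
  shows "a = i \<and> (i = x \<and> b \<in> P \<or> i \<in> P \<and> b = x)"
proof (cases "i = x")
  case True
  then obtain y where "y \<in> P" "{a, b} = {x, y}"
    using assms(2) unfolding cut_edges_def by (auto simp: image_iff)
  then show ?thesis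
    using True assms(3) P_notin_piece_x by (auto simp: doubleton_eq_iff)
next
  case False
  then have "i \<in> P" "{a, b} = {x, i}"
    using assms(1,2) unfolding cut_edges_def by auto
  then show ?thesis
    using False assms(3) x_notin_piece by (auto simp: doubleton_eq_iff)
qed

lemma piece_exit:
  assumes "i \<in> insert x P" "a \<in> verts (piece i)" "adj T a b" "b \<notin> verts (piece i)"
  shows "a = i \<and> (i = x \<and> b \<in> P \<or> i \<in> P \<and> b = x)"
proof -
  have "\<not> adj (delete_edges T (cut_edges i)) a b"
    using component_closed[OF simple_graph_delete_edges[OF simple_T]] assms(2,4)
    unfolding piece_def by blast
  then have "{a, b} \<in> cut_edges i"
    using assms(3) by simp
  then show ?thesis
    using cut_edge_piece assms(1,2) by blast
qed

lemma adj_piece_iff: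
  assumes "i \<in> insert x P" "a \<in> verts (piece i)" "b \<in> verts (piece i)"
  shows "adj (piece i) a b \<longleftrightarrow> adj T a b"
proof -
  have "{a, b} \<notin> cut_edges i"
    using cut_edge_piece[OF assms(1) _ assms(2)] assms(3) P_notin_piece_x x_notin_piece by blast
  moreover have "adj (piece i) a b \<longleftrightarrow> adj (delete_edges T (cut_edges i)) a b"
    using assms(2,3) unfolding piece_def by (rule adj_component_iff)
  ultimately show ?thesis
    by simp
qed

lemma neighbors_piece:
  assumes "i \<in> insert x P" "a \<in> verts (piece i)" "a \<noteq> i"
  shows "neighbors (piece i) a = neighbors T a"
proof -
  have "neighbors (piece i) a = neighbors (delete_edges T (cut_edges i)) a"
    using neighbors_component[OF simple_graph_delete_edges[OF simple_T]] assms(2)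
    unfolding piece_def by blast
  also have "\<dots> = neighbors T a"
    using cut_edge_piece[OF assms(1) _ assms(2)] assms(3) unfolding neighbors_def by auto
  finally show ?thesis .
qed

lemma piece_x_disjoint_branch:
  assumes "y \<in> P"
  shows "verts (piece x) \<inter> verts (piece y) = {}"
proof (rule ccontr)
  let ?Dx = "delete_edges T (cut_edges x)" and ?Dy = "delete_edges T (cut_edges y)"
  assume "verts (piece x) \<inter> verts (piece y) \<noteq> {}"
  then obtain v where vx: "reachable ?Dx x v" and vy: "reachable ?Dy y v"
    unfolding piece_def verts_component by blast
  have "cut_edges y = {{x, y}}" "{x, y} \<in> cut_edges x"
    using assms x_notin_P unfolding cut_edges_def by auto
  then have "edges ?Dx \<subseteq> edges ?Dy"
    by auto
  then have "reachable ?Dy x v"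
    using reachable_mono[OF vx] by simp
  then have "reachable ?Dy y x"
    using reachable_trans[OF vy reachable_sym] by blast
  then show False
    using x_notin_piece[OF assms] unfolding piece_def verts_component by simp
qed

text \<open>A branch never reaches x, so its walks avoid all edges at x and survive cutting another
  branch off; through x it would then reach that other branch.\<close>

lemma branches_disjoint:
  assumes "y \<in> P" "y' \<in> P" "y \<noteq> y'"
  shows "verts (piece y) \<inter> verts (piece y') = {}"
proof (rule ccontr)
  let ?D = "delete_edges T (cut_edges y)" and ?D' = "delete_edges T (cut_edges y')"
  assume "verts (piece y) \<inter> verts (piece y') \<noteq> {}"
  then obtain v where v: "reachable ?D y v" "reachable ?D' y' v"
    unfolding piece_def verts_component by blast
  have cuts: "cut_edges y = {{x, y}}" "cut_edges y' = {{x, y'}}"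
    using assms x_notin_P unfolding cut_edges_def by auto
  have "\<not> reachable ?D y x"
    using x_notin_piece[OF assms(1)] unfolding piece_def verts_component by simp
  then have "reachable (delete_edges ?D {e. x \<in> e}) y v"
    by (rule reachable_avoiding[OF v(1)])
  then have yv: "reachable ?D' y v"
    by (rule reachable_mono) (auto simp: cuts)
  have xy: "reachable ?D' x y"
    using P_adj[OF assms(1)] x_vert assms(3) reachable_adj[of ?D' x y]
    by (simp add: cuts doubleton_eq_iff)
  have "reachable ?D' y' x"
    using reachable_trans[OF reachable_trans[OF v(2) reachable_sym[OF yv]] reachable_sym[OF xy]] .
  then show False
    using x_notin_piece[OF assms(2)] unfolding piece_def verts_component by simp
qed

lemma pieces_disjoint: "disjoint_family_on (\<lambda>i. verts (piece i)) (insert x P)"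
  unfolding disjoint_family_on_def
proof (intro ballI impI)
  fix i j
  assume "i \<in> insert x P" "j \<in> insert x P" "i \<noteq> j"
  then consider "i = x" "j \<in> P" | "i \<in> P" "j = x" | "i \<in> P" "j \<in> P"
    by blast
  then show "verts (piece i) \<inter> verts (piece j) = {}"
    by cases (use piece_x_disjoint_branch branches_disjoint \<open>i \<noteq> j\<close> in auto)
qed

lemma pieces_cover: "verts T = (\<Union>i\<in>insert x P. verts (piece i))"
proof
  show "verts T \<subseteq> (\<Union>i\<in>insert x P. verts (piece i))"
  proof
    fix v
    assume "v \<in> verts T"
    then have "reachable T x v"
      using tree_reachable[OF tree x_vert] by blast
    moreover have "x \<in> (\<Union>i\<in>insert x P. verts (piece i))"
      using root_in_piece by blast
    moreover have "b \<in> (\<Union>i\<in>insert x P. verts (piece i))"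
      if a: "a \<in> (\<Union>i\<in>insert x P. verts (piece i))" and ab: "adj T a b" for a b
    proof -
      obtain i where i: "i \<in> insert x P" "a \<in> verts (piece i)"
        using a by blast
      show ?thesis
        using piece_exit[OF i ab] i(1) root_in_piece by blast
    qed
    ultimately show "v \<in> (\<Union>i\<in>insert x P. verts (piece i))"
      by (rule reachable_invariant)
  qed
  show "(\<Union>i\<in>insert x P. verts (piece i)) \<subseteq> verts T"
    using piece_subgraph(1) by blast
qed

definition glue :: "('a \<Rightarrow> 'a \<Rightarrow> 'a) \<Rightarrow> 'a \<Rightarrow> 'a" where
  "glue \<pi> v = \<pi> (THE i. i \<in> insert x P \<and> v \<in> verts (piece i)) v"

lemma glue_eq:
  assumes "i \<in> insert x P" "v \<in> verts (piece i)"
  shows "glue \<pi> v = \<pi> i v"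
proof -
  have "(THE i. i \<in> insert x P \<and> v \<in> verts (piece i)) = i"
  proof (rule the_equality)
    show "j = i" if "j \<in> insert x P \<and> v \<in> verts (piece j)" for j
      using that assms disjoint_family_onD[OF pieces_disjoint, of j i] by blast
  qed (use assms in blast)
  then show ?thesis
    unfolding glue_def by simp
qed

end

section \<open>Gluing placements of the pieces\<close>

lemma funpow_eq_on:
  assumes "\<And>u. u \<in> A \<Longrightarrow> g u = f u" "\<And>u. u \<in> A \<Longrightarrow> f u \<in> A" "v \<in> A"
  shows "(g ^^ k) v = (f ^^ k) v"
proof -
  have "(g ^^ k) v = (f ^^ k) v \<and> (f ^^ k) v \<in> A"
    by (induction k) (simp_all add: assms)
  then show ?thesis ..
qed

locale glued_placements = tree_split +
  fixes \<pi> :: "'a \<Rightarrow> 'a \<Rightarrow> 'a" and w :: "'a \<Rightarrow> 'a"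
  assumes placement: "i \<in> insert x P \<Longrightarrow> well_2_placement (piece i) (w i) (\<pi> i)"
    and branch_centre: "y \<in> P \<Longrightarrow> w y = y"
    and x_displacement: "gdist (piece x) x (\<pi> x x) \<le> 3"
begin

abbreviation "glued \<equiv> glue \<pi>"

lemma piece_tree: "i \<in> insert x P \<Longrightarrow> tree (piece i)"
  using placement unfolding well_2_placement_def by blast

lemma perm_bij: "i \<in> insert x P \<Longrightarrow> bij_betw (\<pi> i) (verts (piece i)) (verts (piece i))"
  using placement unfolding well_2_placement_def two_placement_def by blast

lemma perm_in_piece: "i \<in> insert x P \<Longrightarrow> v \<in> verts (piece i) \<Longrightarrow> \<pi> i v \<in> verts (piece i)"
  using bij_betwE[OF perm_bij] by blast

lemma glue_in_piece: "i \<in> insert x P \<Longrightarrow> v \<in> verts (piece i) \<Longrightarrow> glued v \<in> verts (piece i)"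
  using glue_eq perm_in_piece by simp

lemma gdist_le_piece:
  "i \<in> insert x P \<Longrightarrow> u \<in> verts (piece i) \<Longrightarrow> v \<in> verts (piece i) \<Longrightarrow> gdist T u v \<le> gdist (piece i) u v"
  using gdist_le_subtree[OF piece_tree piece_subgraph] by blast

lemma glue_bij: "bij_betw glued (verts T) (verts T)"
proof -
  have "bij_betw glued (verts (piece i)) (verts (piece i))" if "i \<in> insert x P" for i
    using perm_bij[OF that] bij_betw_cong[of "verts (piece i)" glued "\<pi> i"] glue_eq[OF that] by blast
  then show ?thesis
    unfolding pieces_cover by (rule bij_betw_UNION_disjoint[OF pieces_disjoint])
qed

lemma glue_no_fixpoint: "v \<in> verts T \<Longrightarrow> glued v \<noteq> v"
  using placement glue_eq unfolding pieces_cover well_2_placement_def by fastforce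

lemma glue_cycles: "v \<in> verts T \<Longrightarrow> \<exists>k\<in>{1..5}. (glued ^^ k) v = v"
proof -
  assume "v \<in> verts T"
  then obtain i where i: "i \<in> insert x P" "v \<in> verts (piece i)"
    unfolding pieces_cover by blast
  then obtain k where "k \<in> {1..5}" "(\<pi> i ^^ k) v = v"
    using placement[OF i(1)] unfolding well_2_placement_def by blast
  moreover have "(glued ^^ k) v = (\<pi> i ^^ k) v"
    using funpow_eq_on[of "verts (piece i)" glued "\<pi> i"] glue_eq[OF i(1)] perm_in_piece[OF i(1)] i(2)
    by blast
  ultimately show ?thesis
    by auto
qed

lemma branch_root_displacement: "y \<in> P \<Longrightarrow> gdist T y (glued y) \<le> 2"
  using placement[of y] branch_centre[of y] gdist_le_piece[of y y "\<pi> y y"]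
    root_in_piece[of y] perm_in_piece[of y y] glue_eq[of y y]
  unfolding well_2_placement_def by force

lemma glue_edge_within_piece:
  assumes "i \<in> insert x P" "a \<in> verts (piece i)" "b \<in> verts (piece i)" "adj T a b"
  shows "\<not> adj T (glued a) (glued b) \<and> gdist T (glued a) (glued b) \<le> 6"
proof -
  have ab: "adj (piece i) a b"
    using adj_piece_iff assms by blast
  have images: "glued a = \<pi> i a" "glued b = \<pi> i b" "\<pi> i a \<in> verts (piece i)" "\<pi> i b \<in> verts (piece i)"
    using glue_eq perm_in_piece assms(1-3) by auto
  have "\<not> adj (piece i) (\<pi> i a) (\<pi> i b)" "gdist (piece i) (\<pi> i a) (\<pi> i b) \<le> 6"
    using placement[OF assms(1)] ab unfolding well_2_placement_def two_placement_def by blast+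
  then show ?thesis
    using images adj_piece_iff[OF assms(1) images(3,4)] gdist_le_piece[OF assms(1) images(3,4)]
    by simp
qed

lemma glue_edge_across:
  assumes "y \<in> P"
  shows "\<not> adj T (glued x) (glued y) \<and> gdist T (glued x) (glued y) \<le> 6"
proof
  have x_in: "x \<in> insert x P" "x \<in> verts (piece x)" and y_in: "y \<in> insert x P" "y \<in> verts (piece y)"
    using assms root_in_piece by auto
  have sx: "glued x \<in> verts (piece x)" and sy: "glued y \<in> verts (piece y)"
    using glue_in_piece x_in y_in by auto
  have "glued x \<noteq> x"
    using glue_no_fixpoint[OF x_vert] .
  moreover have "glued y \<notin> verts (piece x)"
    using sy piece_x_disjoint_branch[OF assms] by blast
  ultimately show "\<not> adj T (glued x) (glued y)"
    using piece_exit[OF x_in(1) sx] by blast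
  have in_T: "glued x \<in> verts T" "glued y \<in> verts T" "y \<in> verts T"
    using sx sy y_in piece_subgraph(1) by blast+
  have "gdist T (glued x) x = gdist T x (glued x)"
    by (rule gdist_commute[OF tree_reachable[OF tree in_T(1) x_vert]])
  also have "\<dots> \<le> gdist (piece x) x (\<pi> x x)"
    using gdist_le_piece[OF x_in sx] glue_eq[OF x_in] by simp
  finally have "gdist T (glued x) x \<le> 3"
    using x_displacement by linarith
  moreover have "gdist T x y \<le> 1"
    using gdist_adj_le[of T x y] P_adj[OF assms] x_vert by simp
  moreover have "gdist T (glued x) (glued y) \<le> gdist T (glued x) y + gdist T y (glued y)"
    using gdist_triangle[OF tree_reachable[OF tree in_T(1,3)] tree_reachable[OF tree in_T(3,2)]] .
  moreover have "gdist T (glued x) y \<le> gdist T (glued x) x + gdist T x y"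
    using gdist_triangle[OF tree_reachable[OF tree in_T(1) x_vert] tree_reachable[OF tree x_vert in_T(3)]] .
  ultimately show "gdist T (glued x) (glued y) \<le> 6"
    using branch_root_displacement[OF assms] by linarith
qed

lemma glue_edge:
  assumes "adj T a b"
  shows "\<not> adj T (glued a) (glued b) \<and> gdist T (glued a) (glued b) \<le> 6"
proof -
  obtain i where i: "i \<in> insert x P" "a \<in> verts (piece i)"
    using adj_verts(1)[OF simple_T assms] unfolding pieces_cover by blast
  show ?thesis
  proof (cases "b \<in> verts (piece i)")
    case True
    then show ?thesis
      using glue_edge_within_piece i assms by blast
  next
    case False
    then consider "a = x" "b \<in> P" | "a \<in> P" "b = x"
      using piece_exit[OF i assms] by blast
    then show ?thesis
    proof cases
      case 1
      then show ?thesis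
        using glue_edge_across[of b] by simp
    next
      case 2
      have "gdist T (glued b) (glued a) = gdist T (glued a) (glued b)"
        using tree_reachable[OF tree] bij_betwE[OF glue_bij] adj_verts(1,2)[OF simple_T assms]
          gdist_commute by metis
      then show ?thesis
        using glue_edge_across[of a] 2 adj_commute[of T "glued a" "glued b"] by simp
    qed
  qed
qed

lemma glue_leaf:
  assumes "2 \<le> degree T x" "v \<in> verts T" "degree T v = 1"
  shows "gdist T v (glued v) \<le> 4"
proof -
  obtain i where i: "i \<in> insert x P" "v \<in> verts (piece i)"
    using assms(2) unfolding pieces_cover by blast
  show ?thesis
  proof (cases "v = i")
    case True
    then have "v \<in> P"
      using assms(1,3) i(1) by auto
    then show ?thesis
      using branch_root_displacement by fastforce
  next
    case False
    then have "degree (piece i) v = 1"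
      using neighbors_piece[OF i False] assms(3) unfolding degree_def by simp
    then have "gdist (piece i) v (\<pi> i v) \<le> 4"
      using placement[OF i(1)] i(2) unfolding well_2_placement_def by blast
    then show ?thesis
      using gdist_le_piece[OF i perm_in_piece[OF i]] glue_eq[OF i] by simp
  qed
qed

lemma centre_in_piece: "w x \<in> verts (piece x)"
  using placement[of x] unfolding well_2_placement_def by blast

lemma glue_centre: "gdist T (w x) (glued (w x)) \<le> 2"
proof -
  have "gdist (piece x) (w x) (\<pi> x (w x)) \<le> 2"
    using placement[of x] unfolding well_2_placement_def by blast
  then show ?thesis
    using gdist_le_piece[of x "w x" "\<pi> x (w x)"] perm_in_piece[of x "w x"] glue_eq[of x "w x"]
      centre_in_piece by simp
qed

lemma glue_centre_neighbors:
  assumes "u \<in> neighbors T (w x)"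
  shows "gdist T u (glued u) \<le> 3"
proof (cases "u \<in> verts (piece x)")
  case True
  then have "u \<in> neighbors (piece x) (w x)"
    using assms adj_piece_iff[of x "w x" u] centre_in_piece unfolding neighbors_def by blast
  then have "gdist (piece x) u (\<pi> x u) \<le> 3"
    using placement[of x] unfolding well_2_placement_def by blast
  then show ?thesis
    using gdist_le_piece[of x u "\<pi> x u"] perm_in_piece[of x u] glue_eq[of x u] True by simp
next
  case False
  then have "u \<in> P"
    using piece_exit[of x "w x" u] assms centre_in_piece unfolding neighbors_def by blast
  then show ?thesis
    using branch_root_displacement by fastforce
qed

lemma well_2_placement_glue:
  assumes "\<not> is_star T" "2 \<le> degree T x"
  shows "well_2_placement T (w x) glued"
  unfolding well_2_placement_def two_placement_def
  using tree assms centre_in_piece piece_subgraph(1) glue_bij glue_no_fixpoint glue_edge glue_centre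
    glue_centre_neighbors glue_leaf glue_cycles by blast

end

theorem lemma3p4:
  fixes T T' :: "'a graph" and x z :: 'a and P :: "'a set" and \<sigma> :: "'a \<Rightarrow> 'a"
  assumes "tree T" and "\<not> is_star T" and "x \<in> verts T"
    and "card (neighbors T x) \<ge> 2"
    and "P \<subseteq> neighbors T x" and "1 \<le> card P" and "card P < card (neighbors T x)"
    and "\<forall>y\<in>P. \<exists>\<tau>. well_2_placement (component (delete_edges T {{x, y}}) y) y \<tau>"
    and "T' = component (delete_edges T ((\<lambda>y. {x, y}) ` P)) x"
    and "z \<in> verts T'"
    and "well_2_placement T' z \<sigma>"
    and "gdist T' x (\<sigma> x) \<le> 3"
  shows "\<exists>\<sigma>z. well_2_placement T z \<sigma>z \<and> (\<forall>v\<in>verts T'. \<sigma>z v = \<sigma> v)"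
proof -
  interpret tree_split T x P
    using assms(1,3,5) by unfold_locales
  obtain \<tau> where \<tau>: "\<forall>y\<in>P. well_2_placement (component (delete_edges T {{x, y}}) y) y (\<tau> y)"
    using bchoice[OF assms(8)] by blast
  have piece_x: "piece x = T'"
    using assms(9) unfolding piece_def cut_edges_def by simp
  have piece_y: "piece y = component (delete_edges T {{x, y}}) y" if "y \<in> P" for y
    using that x_notin_P unfolding piece_def cut_edges_def by auto
  define \<pi> where "\<pi> i = (if i = x then \<sigma> else \<tau> i)" for i
  define w where "w i = (if i = x then z else i)" for i
  interpret glued_placements T x P \<pi> w
    by unfold_locales (use assms(11,12) \<tau> piece_x piece_y x_notin_P in \<open>auto simp: \<pi>_def w_def\<close>)
  have "well_2_placement T z glued"
    using well_2_placement_glue[OF assms(2)] assms(4) unfolding degree_def w_def by simp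
  moreover have "\<forall>v\<in>verts T'. glued v = \<sigma> v"
    using glue_eq[of x] piece_x unfolding \<pi>_def by simp
  ultimately show ?thesis
    by blast
qed

end
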